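(* Let $\alpha\in(0,1]$, $F\in C^{1,\alpha}_{\mathsf h}(\mathbb H,\mathbb R^2)$ and $p\in\mathbb H$ nondegenerate for $F$. Let $F_{p,r}(q):=\big(F(p\,\delta_r(q))-F(p)\big)/r$ for $r>0$ and $F_{p,0}(q):=L(q):=\nabla_{\mathsf h}F(p)\,q^{\mathsf h}$. Then for every $\varepsilon>0$ and every compact $K\subseteq L(B(0,\varepsilon))$ there exists $\bar r>0$ such that $K\subseteq F_{p,r}(B(0,\varepsilon))$ for every $r\in[0,\bar r]$.
   Context: The Heisenberg group $\mathbb H$ is $\mathbb R^3$ with product $(x^1,x^2,x^3)(y^1,y^2,y^3)=(x^1+y^1,x^2+y^2,x^3+y^3+x^1y^2-x^2y^1)$; $x^{\mathsf h}=(x^1,x^2)$. Dilations $\delta_r(x)=(rx^1,rx^2,r^2x^3)$. $\mathsf d$ is a fixed left-invariant, $1$-homogeneous distance on $\mathbb H$; $B(x,r)$ is the open $\mathsf d$-ball. $X_1=\partial_1-x^2\partial_3$, $X_2=\partial_2+x^1\partial_3$. $C^{1,\alpha}_{\mathsf h}(\mathbb H,\mathbb R^2)$: maps $F$ with $X_1F,X_2F$ existing everywhere and $\nabla_{\mathsf h}F=[X_1F,X_2F]$ $\alpha$-Hölder w.r.t. $\mathsf d$ on bounded sets. $p$ nondegenerate: $\nabla_{\mathsf h}F(p)$ invertible. *)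

theory Defs
  imports "HOL-Analysis.Analysis"
begin

text \<open>Heisenberg group modelled on real^3.\<close>

definition hmul :: "real^3 \<Rightarrow> real^3 \<Rightarrow> real^3" where
  "hmul x y = vector [x$1 + y$1, x$2 + y$2, x$3 + y$3 + x$1 * y$2 - x$2 * y$1]"

definition hdil :: "real \<Rightarrow> real^3 \<Rightarrow> real^3" where
  "hdil r x = vector [r * x$1, r * x$2, r^2 * x$3]"

definition horiz :: "real^3 \<Rightarrow> real^2" where
  "horiz x = vector [x$1, x$2]"

definition hom_dist :: "(real^3 \<Rightarrow> real^3 \<Rightarrow> real) \<Rightarrow> bool" where
  "hom_dist d \<longleftrightarrow>
     (\<forall>x y. d x y = 0 \<longleftrightarrow> x = y) \<and>
     (\<forall>x y. d x y = d y x) \<and>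
     (\<forall>x y z. d x z \<le> d x y + d y z) \<and>
     (\<forall>x y z. d (hmul z x) (hmul z y) = d x y) \<and>
     (\<forall>r x y. r > 0 \<longrightarrow> d (hdil r x) (hdil r y) = r * d x y)"

definition dball :: "(real^3 \<Rightarrow> real^3 \<Rightarrow> real) \<Rightarrow> real^3 \<Rightarrow> real \<Rightarrow> (real^3) set" where
  "dball d x r = {y. d x y < r}"

definition d_bounded :: "(real^3 \<Rightarrow> real^3 \<Rightarrow> real) \<Rightarrow> (real^3) set \<Rightarrow> bool" where
  "d_bounded d S \<longleftrightarrow> (\<exists>R. \<forall>x\<in>S. \<forall>y\<in>S. d x y \<le> R)"

text \<open>Horizontal derivatives: X_j F (x) = d/dt F(x * (t e_j)) at t = 0,
  so X_1 = \<partial>_1 - x^2 \<partial>_3 and X_2 = \<partial>_2 + x^1 \<partial>_3.\<close>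
definition Xder :: "(real^3 \<Rightarrow> real^2) \<Rightarrow> 3 \<Rightarrow> real^3 \<Rightarrow> real^2" where
  "Xder F j x = vector_derivative (\<lambda>t. F (hmul x (t *\<^sub>R axis j 1))) (at 0)"

definition hgrad :: "(real^3 \<Rightarrow> real^2) \<Rightarrow> real^3 \<Rightarrow> real^2^2" where
  "hgrad F x = (\<chi> i k. (if k = 1 then Xder F 1 x else Xder F 2 x) $ i)"

definition C1alpha_h :: "(real^3 \<Rightarrow> real^3 \<Rightarrow> real) \<Rightarrow> real \<Rightarrow> (real^3 \<Rightarrow> real^2) \<Rightarrow> bool" where
  "C1alpha_h d \<alpha> F \<longleftrightarrow>
     (\<forall>x. (\<lambda>t. F (hmul x (t *\<^sub>R axis 1 1))) differentiable (at (0::real)) \<and>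
          (\<lambda>t. F (hmul x (t *\<^sub>R axis 2 1))) differentiable (at (0::real))) \<and>
     (\<forall>S. d_bounded d S \<longrightarrow>
        (\<exists>C. \<forall>x\<in>S. \<forall>y\<in>S. norm (hgrad F x - hgrad F y) \<le> C * d x y powr \<alpha>))"

definition Fpr :: "(real^3 \<Rightarrow> real^2) \<Rightarrow> real^3 \<Rightarrow> real \<Rightarrow> real^3 \<Rightarrow> real^2" where
  "Fpr F p r q = (if r = 0 then hgrad F p *v horiz q
                  else (1 / r) *\<^sub>R (F (hmul p (hdil r q)) - F p))"

end

theory Submission
  imports Defs
begin

text \<open>
  Every point of \<open>p \<delta>\<^sub>r(q v\<^sub>1e\<^sub>1 v\<^sub>2e\<^sub>2)\<close> is reached from \<open>p\<close> by a horizontal walk of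
  length \<open>O(r)\<close>: the vertical coordinate of \<open>\<delta>\<^sub>r q\<close> is produced by a commutator of two
  horizontal steps of size \<open>r\<close>. Integrating \<open>X\<^sub>1F, X\<^sub>2F\<close> along this walk and using their
  Hoelder continuity at \<open>p\<close>, the blow-up \<open>v \<mapsto> F\<^sub>p\<^sub>,\<^sub>r(q v\<^sub>1e\<^sub>1 v\<^sub>2e\<^sub>2)\<close> is a continuous map
  that is uniformly \<open>O(r\<^sup>\<alpha>)\<close>-close to the invertible affine map \<open>v \<mapsto> L(q\<^sup>h + v)\<close>. Brouwer's
  fixed point theorem then shows that for small \<open>r\<close> its image contains a fixed ball around
  \<open>L(q)\<close>, and compactness of \<open>K\<close> makes the choice of \<open>r\<close> uniform.
\<close>

lemma vector_derivative_deviation_bound: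
  fixes f :: "real \<Rightarrow> 'b::real_normed_vector"
  assumes f': "\<And>t. t \<in> closed_segment 0 h \<Longrightarrow> (f has_vector_derivative f' t) (at t)"
    and dev: "\<And>t. t \<in> closed_segment 0 h \<Longrightarrow> norm (f' t - X) \<le> E"
  shows "norm (f h - f 0 - h *\<^sub>R X) \<le> \<bar>h\<bar> * E"
proof -
  define g where "g t = f t - t *\<^sub>R X" for t
  have g': "(g has_derivative (\<lambda>s. s *\<^sub>R (f' t - X))) (at t within closed_segment 0 h)"
    if "t \<in> closed_segment 0 h" for t
  proof -
    have "(g has_derivative (\<lambda>s. s *\<^sub>R f' t - s *\<^sub>R X)) (at t)"
      using f'[OF that] unfolding g_def has_vector_derivative_def
      by (intro derivative_intros) auto
    then show ?thesis by (simp add: scaleR_diff_right has_derivative_at_withinI)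
  qed
  have "onorm (\<lambda>s. s *\<^sub>R (f' t - X)) \<le> E" if "t \<in> closed_segment 0 h" for t
    using dev[OF that] onorm_scaleR_left[OF bounded_linear_ident, of "f' t - X"]
    by (simp add: onorm_id)
  then have "norm (g h - g 0) \<le> E * norm (h - 0)"
    using differentiable_bound[OF convex_closed_segment g', of E h 0] by simp
  then show ?thesis by (simp add: g_def algebra_simps)
qed

lemma norm_column_le: "norm (column k (A :: real^'n^'m)) \<le> norm A"
  by (rule norm_le_componentwise_cart) (simp add: column_def component_le_norm_cart)

lemma tendsto_scaled_powr_at_right_0:
  fixes a c \<alpha> :: real
  assumes "0 < \<alpha>" "0 \<le> a"
  shows "((\<lambda>r. c * (r * a) powr \<alpha>) \<longlongrightarrow> 0) (at_right 0)"
proof -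
  have "((\<lambda>r. r * a) \<longlongrightarrow> 0) (at_right 0)"
    by (auto intro!: tendsto_eq_intros)
  moreover have "\<forall>\<^sub>F r in at_right 0. 0 \<le> r * a"
    using assms(2) by (auto simp: eventually_at_right_field intro!: exI[of _ 1])
  ultimately have "((\<lambda>r. (r * a) powr \<alpha>) \<longlongrightarrow> 0) (at_right 0)"
    using assms(1) by (intro tendsto_zero_powrI[OF _ tendsto_const])
  then show ?thesis
    using tendsto_mult_left[of _ 0 _ c] by simp
qed

lemma eventually_compact_cover:
  fixes K :: "'a::metric_space set"
  assumes "compact K" and local: "\<And>k0. k0 \<in> K \<Longrightarrow> \<exists>e>0. eventually (\<lambda>r. ball k0 e \<subseteq> P r) F"
  shows "eventually (\<lambda>r. K \<subseteq> P r) F"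
proof -
  obtain e where e: "\<And>k0. k0 \<in> K \<Longrightarrow> e k0 > 0 \<and> eventually (\<lambda>r. ball k0 (e k0) \<subseteq> P r) F"
    using local by metis
  then have "K \<subseteq> (\<Union>k0\<in>K. ball k0 (e k0))"
    by force
  then obtain T where T: "T \<subseteq> K" "finite T" "K \<subseteq> (\<Union>k0\<in>T. ball k0 (e k0))"
    using compactE_image[OF assms(1), of K "\<lambda>k0. ball k0 (e k0)"] by auto
  have "eventually (\<lambda>r. \<forall>k0\<in>T. ball k0 (e k0) \<subseteq> P r) F"
    using T(1,2) e by (intro eventually_ball_finite) auto
  then show ?thesis
    by eventually_elim (use T(3) in blast)
qed

lemma invertible_bounded_below:
  fixes M :: "real^'n^'n"
  assumes "invertible M"
  obtains \<beta> where "\<And>y. norm y \<le> \<beta> * norm (M *v y)"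
proof -
  obtain Mi where "Mi ** M = mat 1"
    using assms unfolding invertible_def by blast
  then have "norm y \<le> onorm ((*v) Mi) * norm (M *v y)" for y
    using onorm[OF matrix_vector_mul_bounded_linear, of Mi "M *v y"]
    by (simp add: matrix_vector_mul_assoc)
  then show thesis by (rule that)
qed

lemma brouwer_perturbed_linear:
  fixes M :: "real^'n^'n" and \<Phi> :: "real^'n \<Rightarrow> real^'n"
  assumes M: "invertible M" and \<beta>: "\<And>y. norm y \<le> \<beta> * norm (M *v y)" and \<rho>: "0 \<le> \<rho>"
    and cont: "continuous_on (cball 0 \<rho>) \<Phi>"
    and close: "\<And>v. v \<in> cball 0 \<rho> \<Longrightarrow> norm (\<Phi> v - (a + M *v v)) \<le> \<delta>"
    and small: "\<beta> * (norm (k - a) + \<delta>) \<le> \<rho>"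
  shows "\<exists>v\<in>cball 0 \<rho>. \<Phi> v = k"
proof -
  obtain Mi where Mi: "M ** Mi = mat 1" "Mi ** M = mat 1"
    using M unfolding invertible_def by blast
  have "0 < \<beta>"
  proof -
    obtain j :: 'n where True by blast
    have "1 \<le> \<beta> * norm (M *v axis j 1)"
      using \<beta>[of "axis j 1"] by simp
    then show ?thesis
      using mult_nonpos_nonneg[of \<beta> "norm (M *v axis j 1)"] by (cases "0 < \<beta>") auto
  qed
  \<comment> \<open>Fixed points of \<open>g\<close> are exactly the solutions of \<open>\<Phi> v = k\<close>, and \<open>g\<close> maps the ball
    into itself because \<open>g v = M\<^sup>-\<^sup>1 (k - a - (\<Phi> v - (a + M v)))\<close>.\<close>
  define g where "g v = v + Mi *v (k - \<Phi> v)" for v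
  have "g v \<in> cball 0 \<rho>" if v: "v \<in> cball 0 \<rho>" for v
  proof -
    have "M *v g v = (k - a) - (\<Phi> v - (a + M *v v))"
      by (simp add: g_def matrix_vector_mul_assoc Mi matrix_vector_right_distrib algebra_simps)
    then have "norm (g v) \<le> \<beta> * norm ((k - a) - (\<Phi> v - (a + M *v v)))"
      using \<beta>[of "g v"] by simp
    also have "\<dots> \<le> \<beta> * (norm (k - a) + \<delta>)"
      using norm_triangle_ineq4[of "k - a" "\<Phi> v - (a + M *v v)"] close[OF v] \<open>0 < \<beta>\<close>
      by (intro mult_left_mono) auto
    finally show ?thesis using small by simp
  qed
  moreover have "continuous_on (cball 0 \<rho>) g"
    unfolding g_def
    by (intro continuous_intros cont
        continuous_on_compose2[OF matrix_vector_mult_linear_continuous_on[of UNIV Mi]]) auto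
  ultimately obtain v where v: "v \<in> cball 0 \<rho>" "g v = v"
    using brouwer[OF compact_cball convex_cball, of 0 \<rho> g] \<rho> by auto
  then have "M *v (Mi *v (k - \<Phi> v)) = 0"
    by (simp add: g_def)
  then have "\<Phi> v = k"
    by (simp add: matrix_vector_mul_assoc Mi)
  with v show ?thesis by blast
qed

lemma hmul_nth [simp]:
  "hmul x y $ 1 = x$1 + y$1" "hmul x y $ 2 = x$2 + y$2"
  "hmul x y $ 3 = x$3 + y$3 + x$1 * y$2 - x$2 * y$1"
  by (simp_all add: hmul_def)

lemma hdil_nth [simp]: "hdil r x $ 1 = r * x$1" "hdil r x $ 2 = r * x$2" "hdil r x $ 3 = r^2 * x$3"
  by (simp_all add: hdil_def)

lemma horiz_nth [simp]: "horiz x $ 1 = x$1" "horiz x $ 2 = x$2"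
  by (simp_all add: horiz_def)

lemma hmul_zero_right [simp]: "hmul x 0 = x"
  by (simp add: vec_eq_iff forall_3)

lemma hmul_assoc: "hmul (hmul x y) z = hmul x (hmul y z)"
  by (simp add: vec_eq_iff forall_3 algebra_simps)

lemma hmul_axis_axis:
  "i \<in> {1, 2} \<Longrightarrow> hmul (s *\<^sub>R axis i 1) (t *\<^sub>R axis i 1) = (s + t) *\<^sub>R axis i 1"
  by (auto simp: vec_eq_iff forall_3 axis_def)

lemma hdil_zero [simp]: "hdil r 0 = 0"
  by (simp add: vec_eq_iff forall_3)

lemma hdil_axis: "i \<in> {1, 2} \<Longrightarrow> hdil r (t *\<^sub>R axis i 1) = (r * t) *\<^sub>R axis i 1"
  by (auto simp: vec_eq_iff forall_3 axis_def)

fun hwalk :: "real^3 \<Rightarrow> (3 \<times> real) list \<Rightarrow> real^3" where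
  "hwalk y [] = y"
| "hwalk y ((i, h) # xs) = hwalk (hmul y (h *\<^sub>R axis i 1)) xs"

fun walk_length :: "(3 \<times> real) list \<Rightarrow> real" where
  "walk_length [] = 0"
| "walk_length ((i, h) # xs) = \<bar>h\<bar> + walk_length xs"

fun walk_increment :: "(real^3 \<Rightarrow> real^2) \<Rightarrow> real^3 \<Rightarrow> (3 \<times> real) list \<Rightarrow> real^2" where
  "walk_increment F p [] = 0"
| "walk_increment F p ((i, h) # xs) = h *\<^sub>R Xder F i p + walk_increment F p xs"

lemma hwalk_append: "hwalk y (xs @ ys) = hwalk (hwalk y xs) ys"
  by (induction y xs rule: hwalk.induct) auto

lemma walk_length_append [simp]: "walk_length (xs @ ys) = walk_length xs + walk_length ys"
  by (induction xs rule: walk_length.induct) auto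

lemma walk_increment_append [simp]:
  "walk_increment F p (xs @ ys) = walk_increment F p xs + walk_increment F p ys"
  by (induction F p xs rule: walk_increment.induct) auto

lemma walk_length_nonneg: "0 \<le> walk_length xs"
  by (induction xs rule: walk_length.induct) auto

lemma
  assumes "hom_dist d"
  shows hom_dist_self: "d x x = 0"
    and hom_dist_sym: "d x y = d y x"
    and hom_dist_triangle: "d x z \<le> d x y + d y z"
    and hom_dist_left_invariant: "d (hmul z x) (hmul z y) = d x y"
    and hom_dist_hdil: "0 < r \<Longrightarrow> d (hdil r x) (hdil r y) = r * d x y"
  using assms unfolding hom_dist_def by blast+

lemma hom_dist_nonneg:
  assumes "hom_dist d" shows "0 \<le> d x y"
proof -
  have "d x x \<le> d x y + d y x" by (rule hom_dist_triangle[OF assms])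
  then show ?thesis by (simp add: hom_dist_self[OF assms] hom_dist_sym[OF assms, of y x])
qed

lemma hom_dist_hmul_le:
  assumes "hom_dist d" shows "d p (hmul y w) \<le> d p y + d 0 w"
proof -
  have "d y (hmul y w) = d 0 w"
    using hom_dist_left_invariant[OF assms, of y 0 w] by simp
  then show ?thesis using hom_dist_triangle[OF assms, of p "hmul y w" y] by simp
qed

definition axis_len :: "(real^3 \<Rightarrow> real^3 \<Rightarrow> real) \<Rightarrow> real" where
  "axis_len d = max (d 0 (axis 1 1)) (d 0 (axis 2 1))"

lemma hom_dist_axis:
  assumes d: "hom_dist d" and i: "i \<in> {1, 2}"
  shows "d 0 (t *\<^sub>R axis i 1) = \<bar>t\<bar> * d 0 (axis i 1)"
proof -
  have dil: "d 0 (s *\<^sub>R axis i 1) = s * d 0 (axis i 1)" if "0 < s" for s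
    using hom_dist_hdil[OF d that, of 0 "axis i 1"] hdil_axis[OF i, of s 1] by simp
  consider "0 < t" | "t = 0" | "t < 0" by linarith
  then show ?thesis
  proof cases
    case 3
    have "hmul ((-t) *\<^sub>R axis i 1) (t *\<^sub>R axis i 1) = 0"
      using hmul_axis_axis[OF i, of "-t" t] by simp
    then have "d ((-t) *\<^sub>R axis i 1) 0 = d 0 (t *\<^sub>R axis i 1)"
      using hom_dist_left_invariant[OF d, of "(-t) *\<^sub>R axis i 1" 0 "t *\<^sub>R axis i 1"]
      by (metis hmul_zero_right)
    with 3 show ?thesis using dil[of "-t"] hom_dist_sym[OF d] by simp
  qed (use dil hom_dist_self[OF d] in auto)
qed

lemma axis_len_nonneg: "hom_dist d \<Longrightarrow> 0 \<le> axis_len d"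
  unfolding axis_len_def using hom_dist_nonneg by (simp add: le_max_iff_disj)

lemma hom_dist_axis_le:
  assumes "hom_dist d" "i \<in> {1, 2}"
  shows "d 0 (t *\<^sub>R axis i 1) \<le> \<bar>t\<bar> * axis_len d"
  using assms by (auto simp: hom_dist_axis axis_len_def intro: mult_left_mono)

lemma hom_dist_hwalk_le:
  assumes d: "hom_dist d" and "fst ` set xs \<subseteq> {1, 2}"
  shows "d p (hwalk y xs) \<le> d p y + walk_length xs * axis_len d"
  using assms(2)
proof (induction y xs rule: hwalk.induct)
  case (2 y i h xs)
  then have "d p (hwalk (hmul y (h *\<^sub>R axis i 1)) xs)
      \<le> d p (hmul y (h *\<^sub>R axis i 1)) + walk_length xs * axis_len d"
    by simp
  also have "\<dots> \<le> d p y + \<bar>h\<bar> * axis_len d + walk_length xs * axis_len d"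
    using hom_dist_hmul_le[OF d, of p y "h *\<^sub>R axis i 1"] hom_dist_axis_le[OF d, of i h] 2(2)
    by simp
  finally show ?case by (simp add: algebra_simps)
qed simp

lemma has_vector_derivative_Xder:
  assumes C1: "C1alpha_h d \<alpha> F" and i: "i \<in> {1, 2}"
  shows "((\<lambda>t. F (hmul y (t *\<^sub>R axis i 1))) has_vector_derivative
           Xder F i (hmul y (t0 *\<^sub>R axis i 1))) (at t0)"
proof -
  define z where "z = hmul y (t0 *\<^sub>R axis i 1)"
  define g where "g s = F (hmul z (s *\<^sub>R axis i 1))" for s
  have "g differentiable (at 0)"
    using C1 i unfolding C1alpha_h_def g_def by blast
  then have g': "(g has_vector_derivative Xder F i z) (at ((\<lambda>t. t - t0) t0))"
    unfolding Xder_def g_def by (simp add: vector_derivative_works[symmetric])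
  have "((\<lambda>t::real. t - t0) has_vector_derivative 1) (at t0)"
    by (auto intro!: derivative_eq_intros)
  from vector_diff_chain_at[OF this g']
  have "((g \<circ> (\<lambda>t. t - t0)) has_vector_derivative Xder F i z) (at t0)"
    by simp
  moreover have "g \<circ> (\<lambda>t. t - t0) = (\<lambda>t. F (hmul y (t *\<^sub>R axis i 1)))"
    by (auto simp: g_def z_def hmul_assoc hmul_axis_axis[OF i])
  ultimately show ?thesis by (simp add: z_def)
qed

lemma hwalk_increment_le:
  assumes d: "hom_dist d" and C1: "C1alpha_h d \<alpha> F" and xs: "fst ` set xs \<subseteq> {1, 2}"
    and dev: "\<And>z i. i \<in> {1, 2} \<Longrightarrow> d p z \<le> R \<Longrightarrow> norm (Xder F i z - Xder F i p) \<le> E"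
    and near: "d p y + walk_length xs * axis_len d \<le> R"
  shows "norm (F (hwalk y xs) - F y - walk_increment F p xs) \<le> walk_length xs * E"
  using xs near
proof (induction y xs rule: hwalk.induct)
  case (2 y i h xs)
  define y' where "y' = hmul y (h *\<^sub>R axis i 1)"
  have i: "i \<in> {1, 2}" and xs: "fst ` set xs \<subseteq> {1, 2}" using 2(2) by auto
  have step: "d p (hmul y (t *\<^sub>R axis i 1)) \<le> d p y + \<bar>t\<bar> * axis_len d" for t
    using hom_dist_hmul_le[OF d, of p y "t *\<^sub>R axis i 1"] hom_dist_axis_le[OF d i, of t]
    by simp
  have "d p (hmul y (t *\<^sub>R axis i 1)) \<le> R" if "t \<in> closed_segment 0 h" for t
  proof -
    have "\<bar>t\<bar> \<le> \<bar>h\<bar>"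
      using that by (auto simp: closed_segment_real_eq abs_mult intro!: mult_left_le)
    then have "\<bar>t\<bar> * axis_len d \<le> (\<bar>h\<bar> + walk_length xs) * axis_len d"
      using walk_length_nonneg[of xs] axis_len_nonneg[OF d] by (intro mult_right_mono) auto
    then show ?thesis using step[of t] 2(3) by (simp add: algebra_simps)
  qed
  then have "norm (F y' - F y - h *\<^sub>R Xder F i p) \<le> \<bar>h\<bar> * E"
    unfolding y'_def
    using vector_derivative_deviation_bound[where f = "\<lambda>t. F (hmul y (t *\<^sub>R axis i 1))",
          OF has_vector_derivative_Xder[OF C1 i] dev[OF i]]
    by simp
  moreover have "norm (F (hwalk y' xs) - F y' - walk_increment F p xs) \<le> walk_length xs * E"
    using 2(1) xs step[of h] 2(3) unfolding y'_def by (simp add: algebra_simps)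
  ultimately have "norm ((F (hwalk y' xs) - F y' - walk_increment F p xs) + (F y' - F y - h *\<^sub>R Xder F i p))
      \<le> walk_length xs * E + \<bar>h\<bar> * E"
    by (intro order_trans[OF norm_triangle_ineq] add_mono)
  then show ?case by (simp add: y'_def algebra_simps)
qed simp

lemma norm_Xder_diff_le_hgrad:
  assumes "(i :: 3) \<in> {1, 2}"
  shows "norm (Xder F i z - Xder F i p) \<le> norm (hgrad F z - hgrad F p)"
proof -
  have "Xder F 1 z - Xder F 1 p = column 1 (hgrad F z - hgrad F p)"
    "Xder F 2 z - Xder F 2 p = column 2 (hgrad F z - hgrad F p)"
    by (auto simp: vec_eq_iff column_def hgrad_def)
  then show ?thesis using assms norm_column_le by auto
qed

lemma hgrad_mult: "hgrad F p *v v = v$1 *\<^sub>R Xder F 1 p + v$2 *\<^sub>R Xder F 2 p"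
  by (simp add: vec_eq_iff matrix_vector_mult_def sum_2 hgrad_def forall_2 mult.commute)

lemma Xder_holder_at:
  assumes d: "hom_dist d" and C1: "C1alpha_h d \<alpha> F"
  obtains C where "0 \<le> C"
    "\<And>z i. i \<in> {1, 2} \<Longrightarrow> d p z \<le> R \<Longrightarrow> norm (Xder F i z - Xder F i p) \<le> C * d p z powr \<alpha>"
proof -
  define S where "S = {z. d p z \<le> R}"
  have "d x y \<le> 2 * R" if "x \<in> S" "y \<in> S" for x y
    using that hom_dist_triangle[OF d, of x y p] hom_dist_sym[OF d, of x p] by (simp add: S_def)
  then have "d_bounded d S"
    unfolding d_bounded_def by blast
  then obtain C where C: "\<And>x y. x \<in> S \<Longrightarrow> y \<in> S \<Longrightarrow> norm (hgrad F x - hgrad F y) \<le> C * d x y powr \<alpha>"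
    using C1 unfolding C1alpha_h_def by blast
  show thesis
  proof (rule that[of "max C 0"])
    fix z and i :: 3 assume i: "i \<in> {1, 2}" and z: "d p z \<le> R"
    have p: "p \<in> S"
      using z hom_dist_nonneg[OF d, of p z] hom_dist_self[OF d, of p] by (simp add: S_def)
    have "norm (Xder F i z - Xder F i p) \<le> norm (hgrad F z - hgrad F p)"
      using norm_Xder_diff_le_hgrad[OF i] .
    also have "\<dots> \<le> C * d z p powr \<alpha>"
      using C[OF _ p] z by (simp add: S_def hom_dist_sym[OF d, of p z])
    also have "\<dots> \<le> max C 0 * d p z powr \<alpha>"
      by (simp add: hom_dist_sym[OF d, of p z] mult_right_mono)
    finally show "norm (Xder F i z - Xder F i p) \<le> max C 0 * d p z powr \<alpha>" .
  qed simp
qed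

lemma hwalk_holder_estimate:
  assumes d: "hom_dist d" and C1: "C1alpha_h d \<alpha> F" and \<alpha>: "0 \<le> \<alpha>" and xs: "fst ` set xs \<subseteq> {1, 2}"
    and C: "0 \<le> C"
      "\<And>z i. i \<in> {1, 2} \<Longrightarrow> d p z \<le> R \<Longrightarrow> norm (Xder F i z - Xder F i p) \<le> C * d p z powr \<alpha>"
    and short: "walk_length xs * axis_len d \<le> R"
  shows "norm (F (hwalk p xs) - F p - walk_increment F p xs) \<le> walk_length xs * (C * R powr \<alpha>)"
proof (rule hwalk_increment_le[OF d C1 xs])
  fix z and i :: 3 assume "i \<in> {1, 2}" "d p z \<le> R"
  then show "norm (Xder F i z - Xder F i p) \<le> C * R powr \<alpha>"
    using C hom_dist_nonneg[OF d, of p z] \<alpha>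
    by (meson mult_left_mono order_trans powr_mono2)
qed (use short hom_dist_self[OF d] in simp)

lemma norm_walk_increment_le:
  "fst ` set xs \<subseteq> {1, 2} \<Longrightarrow>
    norm (walk_increment F p xs) \<le> walk_length xs * (norm (Xder F 1 p) + norm (Xder F 2 p))"
proof (induction F p xs rule: walk_increment.induct)
  case (2 F p i h xs)
  have "norm (h *\<^sub>R Xder F i p) \<le> \<bar>h\<bar> * (norm (Xder F 1 p) + norm (Xder F 2 p))"
    using 2(2) by (auto intro!: mult_left_mono)
  with 2 show ?case
    by (auto simp: distrib_right intro!: order_trans[OF norm_triangle_ineq])
qed simp

lemma hwalk_lipschitz_estimate:
  assumes d: "hom_dist d" and C1: "C1alpha_h d \<alpha> F" and \<alpha>: "0 \<le> \<alpha>" and xs: "fst ` set xs \<subseteq> {1, 2}"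
    and C: "0 \<le> C"
      "\<And>z i. i \<in> {1, 2} \<Longrightarrow> d p z \<le> R \<Longrightarrow> norm (Xder F i z - Xder F i p) \<le> C * d p z powr \<alpha>"
    and short: "walk_length xs * axis_len d \<le> R"
  shows "norm (F (hwalk p xs) - F p)
    \<le> walk_length xs * (C * R powr \<alpha> + (norm (Xder F 1 p) + norm (Xder F 2 p)))"
proof -
  have "norm (F (hwalk p xs) - F p)
      \<le> norm (F (hwalk p xs) - F p - walk_increment F p xs) + norm (walk_increment F p xs)"
    using norm_triangle_ineq[of "F (hwalk p xs) - F p - walk_increment F p xs"
        "walk_increment F p xs"] by simp
  also have "\<dots> \<le> walk_length xs * (C * R powr \<alpha>)
      + walk_length xs * (norm (Xder F 1 p) + norm (Xder F 2 p))"
    by (intro add_mono hwalk_holder_estimate[OF d C1 \<alpha> xs C short] norm_walk_increment_le xs)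
  finally show ?thesis by (simp add: distrib_left)
qed

definition hshift :: "real^3 \<Rightarrow> real^2 \<Rightarrow> real^3" where
  "hshift x v = hmul x (hmul (v$1 *\<^sub>R axis 1 1) (v$2 *\<^sub>R axis 2 1))"

lemma hshift_eq_hwalk: "hshift x v = hwalk x [(1, v$1), (2, v$2)]"
  by (simp add: hshift_def hmul_assoc)

lemma hom_dist_hshift_le:
  assumes d: "hom_dist d"
  shows "d 0 (hshift q v) \<le> d 0 q + 2 * norm v * axis_len d"
proof -
  have "\<bar>v$1\<bar> + \<bar>v$2\<bar> \<le> 2 * norm v"
    using component_le_norm_cart[of v 1] component_le_norm_cart[of v 2] by simp
  then have "(\<bar>v$1\<bar> + \<bar>v$2\<bar>) * axis_len d \<le> 2 * norm v * axis_len d"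
    using axis_len_nonneg[OF d] by (rule mult_right_mono)
  then show ?thesis
    using hom_dist_hwalk_le[OF d, of "[(1, v$1), (2, v$2)]" 0 q] by (simp add: hshift_eq_hwalk)
qed

lemma hshift_connecting_walk:
  obtains L where "fst ` set L \<subseteq> {1, 2}" "hwalk (hshift x w0) L = hshift x w"
    "walk_length L \<le> \<bar>w$1 - w0$1\<bar> + \<bar>w$2 - w0$2\<bar> + 2 * sqrt \<bar>w$1 - w0$1\<bar> * (1 + \<bar>w$2\<bar>)"
proof -
  define \<Delta> where "\<Delta> = w$1 - w0$1"
  define u where "u = sgn \<Delta> * sqrt \<bar>\<Delta>\<bar>"
  define v where "v = sqrt \<bar>\<Delta>\<bar> * w$2"
  have uv: "u * v = \<Delta> * w$2"
    by (simp add: u_def v_def mult_ac sgn_mult_abs abs_mult_sgn flip: real_sqrt_mult)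
  have u: "\<bar>u\<bar> \<le> sqrt \<bar>\<Delta>\<bar>"
    by (simp add: u_def abs_mult abs_sgn_eq)
  \<comment> \<open>Swapping the order of the two horizontal increments changes the vertical
    coordinate by \<open>2 \<Delta> w$2\<close>; the commutator of \<open>u e\<^sub>1\<close> and \<open>v e\<^sub>2\<close> compensates exactly that.\<close>
  define L where "L = [(2::3, w$2 - w0$2), (1, \<Delta>), (1, u), (2, v), (1, -u), (2, -v)]"
  have "hwalk (hshift x w0) L = hshift x w"
    using uv by (simp add: L_def \<Delta>_def hshift_def vec_eq_iff forall_3 axis_def algebra_simps)
  moreover have "walk_length L \<le> \<bar>\<Delta>\<bar> + \<bar>w$2 - w0$2\<bar> + 2 * sqrt \<bar>\<Delta>\<bar> * (1 + \<bar>w$2\<bar>)"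
    using u by (simp add: L_def v_def abs_mult algebra_simps)
  ultimately show thesis
    by (intro that[of L]) (auto simp: L_def \<Delta>_def)
qed

text \<open>\<open>F\<close> is not assumed to be continuous. The points \<open>hshift x w\<^sub>0\<close> and
  \<open>hshift x w\<close> are joined by a horizontal walk of length \<open>O(\<surd>|w - w\<^sub>0|)\<close>, along which \<open>F\<close>
  is Lipschitz.\<close>

lemma continuous_on_F_hshift:
  assumes d: "hom_dist d" and C1: "C1alpha_h d \<alpha> F" and \<alpha>: "0 \<le> \<alpha>"
  shows "continuous_on UNIV (\<lambda>w. F (hshift x w))"
proof -
  have "isCont (\<lambda>w. F (hshift x w)) w0" for w0
  proof -
    define y0 where "y0 = hshift x w0"
    define len where "len w = \<bar>w$1 - w0$1\<bar> + \<bar>w$2 - w0$2\<bar> + 2 * sqrt \<bar>w$1 - w0$1\<bar> * (1 + \<bar>w$2\<bar>)"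
      for w :: "real^2"
    define R where "R = (6 + 2 * \<bar>w0$2\<bar>) * axis_len d"
    obtain C where C: "0 \<le> C"
      "\<And>z i. i \<in> {1, 2} \<Longrightarrow> d y0 z \<le> R \<Longrightarrow> norm (Xder F i z - Xder F i y0) \<le> C * d y0 z powr \<alpha>"
      using Xder_holder_at[OF d C1] by blast
    define K where "K = C * R powr \<alpha> + (norm (Xder F 1 y0) + norm (Xder F 2 y0))"
    have K: "0 \<le> K" using C(1) by (simp add: K_def)
    have near: "norm (F (hshift x w) - F y0) \<le> len w * K" if "dist w w0 < 1" for w
    proof -
      obtain L where L: "fst ` set L \<subseteq> {1, 2}" "hwalk y0 L = hshift x w" "walk_length L \<le> len w"
        using hshift_connecting_walk unfolding y0_def len_def by blast
      have "\<bar>w$1 - w0$1\<bar> \<le> 1" "\<bar>w$2 - w0$2\<bar> \<le> 1"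
        using that component_le_norm_cart[of "w - w0" 1] component_le_norm_cart[of "w - w0" 2]
        by (auto simp: dist_norm)
      then have "sqrt \<bar>w$1 - w0$1\<bar> * (1 + \<bar>w$2\<bar>) \<le> 1 * (2 + \<bar>w0$2\<bar>)"
        by (intro mult_mono) auto
      with \<open>\<bar>w$1 - w0$1\<bar> \<le> 1\<close> \<open>\<bar>w$2 - w0$2\<bar> \<le> 1\<close> have "len w \<le> 6 + 2 * \<bar>w0$2\<bar>"
        by (simp add: len_def)
      then have short: "walk_length L * axis_len d \<le> R"
        unfolding R_def using L(3) axis_len_nonneg[OF d] by (intro mult_right_mono) auto
      have "norm (F (hwalk y0 L) - F y0) \<le> walk_length L * K"
        unfolding K_def by (rule hwalk_lipschitz_estimate[OF d C1 \<alpha> L(1) C short])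
      also have "\<dots> \<le> len w * K"
        using L(3) K by (rule mult_right_mono)
      finally show ?thesis using L(2) by simp
    qed
    have "((\<lambda>w. len w * K) \<longlongrightarrow> len w0 * K) (at w0)"
      unfolding len_def by (intro tendsto_intros)
    then have "((\<lambda>w. len w * K) \<longlongrightarrow> 0) (at w0)"
      by (simp add: len_def)
    moreover have "\<forall>\<^sub>F w in at w0. norm (F (hshift x w) - F y0) \<le> len w * K"
      unfolding eventually_at using near by (intro exI[of _ 1]) auto
    ultimately have "((\<lambda>w. F (hshift x w) - F y0) \<longlongrightarrow> 0) (at w0)"
      by (rule Lim_null_comparison[rotated])
    then show ?thesis
      unfolding isCont_def y0_def by (rule LIM_zero_cancel)
  qed
  then show ?thesis by (simp add: continuous_on_eq_continuous_at)
qed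

text \<open>The steps \<open>(r e\<^sub>1)(r c e\<^sub>2)(-r e\<^sub>1)(-r c e\<^sub>2)\<close> form a commutator whose only effect
  is the vertical displacement \<open>2 r\<^sup>2 c\<close>; with \<open>c = (q\<^sub>3 - q\<^sub>1 q\<^sub>2) / 2\<close> it completes the
  vertical coordinate of \<open>\<delta>\<^sub>r q\<close>.\<close>

definition dilated_walk :: "real \<Rightarrow> real^3 \<Rightarrow> (3 \<times> real) list" where
  "dilated_walk r q = (let c = (q$3 - q$1 * q$2) / 2 in
     [(1, r * q$1), (2, r * q$2), (1, r), (2, r * c), (1, -r), (2, -r * c)])"

lemma hmul_hdil_hshift: "hmul p (hdil r (hshift q v)) = hshift (hwalk p (dilated_walk r q)) (r *\<^sub>R v)"
  by (simp add: dilated_walk_def hshift_def vec_eq_iff forall_3 axis_def power2_eq_square field_simps)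

lemma walk_length_dilated_walk:
  "walk_length (dilated_walk r q) = \<bar>r\<bar> * (\<bar>q$1\<bar> + \<bar>q$2\<bar> + 2 + \<bar>q$3 - q$1 * q$2\<bar>)"
proof -
  have "\<bar>r * ((q$3 - q$1 * q$2) / 2)\<bar> = \<bar>r\<bar> * \<bar>q$3 - q$1 * q$2\<bar> / 2"
    by (simp add: abs_mult)
  then show ?thesis by (simp add: dilated_walk_def Let_def abs_mult algebra_simps)
qed

lemma walk_increment_dilated_walk:
  "walk_increment F p (dilated_walk r q) = r *\<^sub>R (hgrad F p *v horiz q)"
  by (simp add: dilated_walk_def hgrad_mult algebra_simps)

lemma Fpr_hshift_linearization:
  assumes d: "hom_dist d" and C1: "C1alpha_h d \<alpha> F" and \<alpha>: "0 \<le> \<alpha>" and r: "0 < r"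
    and C: "0 \<le> C"
      "\<And>z i. i \<in> {1, 2} \<Longrightarrow> d p z \<le> R \<Longrightarrow> norm (Xder F i z - Xder F i p) \<le> C * d p z powr \<alpha>"
    and W: "\<bar>q$1\<bar> + \<bar>q$2\<bar> + 2 + \<bar>q$3 - q$1 * q$2\<bar> + \<bar>v$1\<bar> + \<bar>v$2\<bar> \<le> W"
    and short: "r * W * axis_len d \<le> R"
  shows "norm (Fpr F p r (hshift q v) - hgrad F p *v (horiz q + v)) \<le> W * (C * R powr \<alpha>)"
proof -
  define xs where "xs = dilated_walk r q @ [(1, r * v$1), (2, r * v$2)]"
  have horizontal: "fst ` set xs \<subseteq> {1, 2}"
    by (auto simp: xs_def dilated_walk_def)
  have endpoint: "hwalk p xs = hmul p (hdil r (hshift q v))"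
    by (simp only: hmul_hdil_hshift) (simp add: xs_def hwalk_append hshift_eq_hwalk)
  have increment: "walk_increment F p xs = r *\<^sub>R (hgrad F p *v (horiz q + v))"
    by (simp add: xs_def walk_increment_dilated_walk hgrad_mult algebra_simps)
  have "walk_length xs = r * (\<bar>q$1\<bar> + \<bar>q$2\<bar> + 2 + \<bar>q$3 - q$1 * q$2\<bar> + \<bar>v$1\<bar> + \<bar>v$2\<bar>)"
    using r by (simp add: xs_def walk_length_dilated_walk abs_mult distrib_left)
  with W r have length: "walk_length xs \<le> r * W"
    by simp
  then have "walk_length xs * axis_len d \<le> R"
    using short axis_len_nonneg[OF d] by (meson mult_right_mono order_trans)
  from hwalk_holder_estimate[OF d C1 \<alpha> horizontal C this]
  have "norm (F (hwalk p xs) - F p - walk_increment F p xs) \<le> r * W * (C * R powr \<alpha>)"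
    using length C(1) by (simp add: mult_right_mono order_trans)
  moreover have "Fpr F p r (hshift q v) - hgrad F p *v (horiz q + v)
      = (1 / r) *\<^sub>R (F (hwalk p xs) - F p - walk_increment F p xs)"
    using r by (simp add: Fpr_def endpoint increment algebra_simps)
  ultimately have "r * norm (Fpr F p r (hshift q v) - hgrad F p *v (horiz q + v))
      \<le> r * (W * (C * R powr \<alpha>))"
    using r by (simp add: mult_ac)
  then show ?thesis
    using r by simp
qed

lemma continuous_on_Fpr_hshift:
  assumes "hom_dist d" "C1alpha_h d \<alpha> F" "0 \<le> \<alpha>" "0 < r"
  shows "continuous_on S (\<lambda>v. Fpr F p r (hshift q v))"
proof -
  have "Fpr F p r (hshift q v) = (1 / r) *\<^sub>R (F (hshift (hwalk p (dilated_walk r q)) (r *\<^sub>R v)) - F p)"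
    for v using assms(4) by (simp add: Fpr_def hmul_hdil_hshift)
  moreover have "continuous_on S (\<lambda>v. F (hshift (hwalk p (dilated_walk r q)) (r *\<^sub>R v)))"
    by (rule continuous_on_compose2[OF continuous_on_F_hshift[OF assms(1-3)]])
      (auto intro: continuous_intros)
  ultimately show ?thesis
    by (simp only:) (intro continuous_intros)
qed

lemma Fpr_hshift_onto:
  assumes d: "hom_dist d" and C1: "C1alpha_h d \<alpha> F" and \<alpha>: "0 \<le> \<alpha>" and r: "0 < r"
    and M: "invertible (hgrad F p)" and \<beta>: "\<And>y. norm y \<le> \<beta> * norm (hgrad F p *v y)"
    and \<rho>: "0 \<le> \<rho>" and q: "d 0 q + 2 * \<rho> * axis_len d < \<epsilon>"
    and C: "0 \<le> C" "\<And>z i. i \<in> {1, 2} \<Longrightarrow> d p z \<le> r * W * axis_len d \<Longrightarrow>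
                          norm (Xder F i z - Xder F i p) \<le> C * d p z powr \<alpha>"
    and W: "\<bar>q$1\<bar> + \<bar>q$2\<bar> + 2 + \<bar>q$3 - q$1 * q$2\<bar> + 2 * \<rho> \<le> W"
    and small: "\<beta> * (norm (k - hgrad F p *v horiz q) + W * (C * (r * W * axis_len d) powr \<alpha>)) \<le> \<rho>"
  shows "k \<in> Fpr F p r ` dball d 0 \<epsilon>"
proof -
  have "\<exists>v\<in>cball 0 \<rho>. Fpr F p r (hshift q v) = k"
  proof (rule brouwer_perturbed_linear[OF M \<beta> \<rho> continuous_on_Fpr_hshift[OF d C1 \<alpha> r] _ small])
    fix v :: "real^2" assume "v \<in> cball 0 \<rho>"
    then have "\<bar>v$1\<bar> \<le> \<rho>" "\<bar>v$2\<bar> \<le> \<rho>"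
      using component_le_norm_cart[of v 1] component_le_norm_cart[of v 2] by auto
    with W have "\<bar>q$1\<bar> + \<bar>q$2\<bar> + 2 + \<bar>q$3 - q$1 * q$2\<bar> + \<bar>v$1\<bar> + \<bar>v$2\<bar> \<le> W"
      by linarith
    from Fpr_hshift_linearization[OF d C1 \<alpha> r C this order_refl]
    show "norm (Fpr F p r (hshift q v) - (hgrad F p *v horiz q + hgrad F p *v v))
        \<le> W * (C * (r * W * axis_len d) powr \<alpha>)"
      by (simp add: matrix_vector_right_distrib)
  qed
  then obtain v where v: "norm v \<le> \<rho>" "Fpr F p r (hshift q v) = k"
    by auto
  have "2 * norm v * axis_len d \<le> 2 * \<rho> * axis_len d"
    using v(1) axis_len_nonneg[OF d] by (intro mult_right_mono) auto
  then have "hshift q v \<in> dball d 0 \<epsilon>"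
    using hom_dist_hshift_le[OF d, of q v] q by (simp add: dball_def)
  with v(2) show ?thesis by blast
qed

lemma Fpr_locally_onto:
  assumes d: "hom_dist d" and C1: "C1alpha_h d \<alpha> F" and \<alpha>: "0 < \<alpha>"
    and M: "invertible (hgrad F p)" and q0: "d 0 q0 < \<epsilon>"
  shows "\<exists>e>0. \<forall>\<^sub>F r in at_right 0. ball (hgrad F p *v horiz q0) e \<subseteq> Fpr F p r ` dball d 0 \<epsilon>"
proof -
  obtain \<beta> where \<beta>: "\<And>y. norm y \<le> \<beta> * norm (hgrad F p *v y)"
    using invertible_bounded_below[OF M] by blast
  have al: "0 \<le> axis_len d" by (rule axis_len_nonneg[OF d])
  define \<rho> where "\<rho> = (\<epsilon> - d 0 q0) / (2 * (axis_len d + 1))"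
  have \<rho>: "0 < \<rho>" using q0 al by (simp add: \<rho>_def)
  have "2 * \<rho> * (axis_len d + 1) = \<epsilon> - d 0 q0"
    using al unfolding \<rho>_def by (simp add: divide_simps algebra_simps)
  with \<rho> have \<rho>_small: "d 0 q0 + 2 * \<rho> * axis_len d < \<epsilon>" by (simp add: algebra_simps)
  define W where "W = \<bar>q0$1\<bar> + \<bar>q0$2\<bar> + 2 + \<bar>q0$3 - q0$1 * q0$2\<bar> + 2 * \<rho>"
  have W: "0 \<le> W" using \<rho> by (simp add: W_def)
  obtain C where C: "0 \<le> C" "\<And>z i. i \<in> {1, 2} \<Longrightarrow> d p z \<le> W * axis_len d \<Longrightarrow>
      norm (Xder F i z - Xder F i p) \<le> C * d p z powr \<alpha>"
    using Xder_holder_at[OF d C1] by blast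
  define e where "e = \<rho> / (2 * (\<bar>\<beta>\<bar> + 1))"
  have "\<bar>\<beta>\<bar> * (2 * e) = \<rho> * (\<bar>\<beta>\<bar> / (\<bar>\<beta>\<bar> + 1))"
    by (simp add: e_def divide_simps algebra_simps)
  also have "\<dots> \<le> \<rho>"
    using \<rho> by (intro mult_left_le) auto
  finally have e: "0 < e" "\<bar>\<beta>\<bar> * (2 * e) \<le> \<rho>"
    using \<rho> by (auto simp: e_def add_nonneg_pos)
  have "((\<lambda>r. (W * C) * (r * (W * axis_len d)) powr \<alpha>) \<longlongrightarrow> 0) (at_right 0)"
    using \<alpha> W al by (intro tendsto_scaled_powr_at_right_0) auto
  then have "\<forall>\<^sub>F r in at_right 0. W * (C * (r * W * axis_len d) powr \<alpha>) < e"
    using e(1) by (auto dest: order_tendstoD(2) simp: mult_ac)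
  moreover have "\<forall>\<^sub>F r in at_right (0::real). 0 < r \<and> r \<le> 1"
    by (auto simp: eventually_at_right_field intro!: exI[of _ 1])
  ultimately have "\<forall>\<^sub>F r in at_right 0. ball (hgrad F p *v horiz q0) e \<subseteq> Fpr F p r ` dball d 0 \<epsilon>"
  proof eventually_elim
    case (elim r)
    have "r * W * axis_len d \<le> W * axis_len d"
      using elim W al by (simp add: mult_left_le_one_le mult.assoc)
    then have Cr: "\<And>z i. i \<in> {1, 2} \<Longrightarrow> d p z \<le> r * W * axis_len d \<Longrightarrow>
        norm (Xder F i z - Xder F i p) \<le> C * d p z powr \<alpha>"
      using C(2) by fastforce
    show ?case
    proof
      fix k assume k: "k \<in> ball (hgrad F p *v horiz q0) e"
      define err where "err = norm (k - hgrad F p *v horiz q0) + W * (C * (r * W * axis_len d) powr \<alpha>)"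
      have "0 \<le> err" "err \<le> 2 * e"
        using k elim W C(1) by (auto simp: err_def dist_norm norm_minus_commute)
      then have "\<beta> * err \<le> \<rho>"
        using e(2) by (meson abs_ge_self mult_mono mult_right_mono order_trans abs_ge_zero)
      then show "k \<in> Fpr F p r ` dball d 0 \<epsilon>"
        unfolding err_def using elim
        by (intro Fpr_hshift_onto[OF d C1 less_imp_le[OF \<alpha>] _ M \<beta> less_imp_le[OF \<rho>] \<rho>_small C(1) Cr
            W_def[symmetric, THEN eq_refl]]) auto
    qed
  qed
  with e(1) show ?thesis by blast
qed

theorem mainTheorem13:
  fixes d :: "real^3 \<Rightarrow> real^3 \<Rightarrow> real" and F :: "real^3 \<Rightarrow> real^2"
    and \<alpha> \<epsilon> :: real and p :: "real^3" and K :: "(real^2) set"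
  assumes "hom_dist d"
    and "0 < \<alpha>" and "\<alpha> \<le> 1"
    and "C1alpha_h d \<alpha> F"
    and "invertible (hgrad F p)"
    and "\<epsilon> > 0"
    and "compact K"
    and "K \<subseteq> (\<lambda>q. hgrad F p *v horiz q) ` dball d 0 \<epsilon>"
  shows "\<exists>rb>0. \<forall>r\<in>{0..rb}. K \<subseteq> Fpr F p r ` dball d 0 \<epsilon>"
proof -
  have "\<forall>\<^sub>F r in at_right 0. K \<subseteq> Fpr F p r ` dball d 0 \<epsilon>"
  proof (rule eventually_compact_cover[OF assms(7)])
    fix k0 assume "k0 \<in> K"
    then obtain q0 where "d 0 q0 < \<epsilon>" "k0 = hgrad F p *v horiz q0"
      using assms(8) by (auto simp: dball_def)
    then show "\<exists>e>0. \<forall>\<^sub>F r in at_right 0. ball k0 e \<subseteq> Fpr F p r ` dball d 0 \<epsilon>"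
      using Fpr_locally_onto[OF assms(1,4,2,5)] by blast
  qed
  then obtain b where b: "0 < b" "\<And>r. 0 < r \<Longrightarrow> r < b \<Longrightarrow> K \<subseteq> Fpr F p r ` dball d 0 \<epsilon>"
    by (auto simp: eventually_at_right_field)
  have "Fpr F p 0 = (\<lambda>q. hgrad F p *v horiz q)"
    by (simp add: Fpr_def fun_eq_iff)
  then have "K \<subseteq> Fpr F p r ` dball d 0 \<epsilon>" if "r \<in> {0..b/2}" for r
    using that b assms(8) by (cases "r = 0") auto
  with b(1) show ?thesis
    by (intro exI[of _ "b/2"]) auto
qed

end
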